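(* Let $\rho=(a^b)$ be a partition of $n=ab$ with $a\ge 3$ and $b\ge 3$. Define \[ \alpha(\rho)=(a+1,a^{\,b-2},a-1),\quad \beta(\rho)=(a^{\,b-1},a-1,1), \] \[ \gamma_1(\rho)=(a+1,a^{\,b-3},(a-1)^2,1),\quad \gamma_2(\rho)=(a+1,a^{\,b-2},a-2,1) \] (parts reordered into nonincreasing order where necessary). Then $\alpha(\rho),\beta(\rho),\gamma_1(\rho),\gamma_2(\rho)$ form a $4$-clique in $G_n$. In particular, the edge $\alpha(\rho)\beta(\rho)$ is contained in a $3$-simplex of the clique complex $K_n=\mathrm{Cl}(G_n)$.
   Context: The partition graph $G_n$ has as vertices the integer partitions of $n$; two partitions are adjacent if one is obtained from the other by a single elementary unit transfer followed by reordering: decrease one part by $1$ and either increase a different part by $1$ or create a new part equal to $1$, then delete a part that became $0$ and sort in nonincreasing order (the result being different from the original). Exponent notation $a^k$ denotes $k$ parts equal to $a$. The clique complex $\mathrm{Cl}(G_n)$ is the simplicial complex whose simplices are the cliques of $G_n$. *)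

theory Defs
  imports Main
begin

definition is_partition :: "nat \<Rightarrow> nat list \<Rightarrow> bool" where
  "is_partition n p \<longleftrightarrow> sorted_wrt (\<ge>) p \<and> (\<forall>x\<in>set p. 0 < x) \<and> sum_list p = n"

text \<open>Elementary unit transfer: decrease part i by 1, and either increase a different
  part j (j < length p) by 1, or (j = length p) create a new part equal to 1;
  then delete zero parts and sort nonincreasingly.\<close>
definition transfer :: "nat list \<Rightarrow> nat \<Rightarrow> nat \<Rightarrow> nat list" where
  "transfer p i j =
     rev (sort (filter (\<lambda>x. x \<noteq> 0)
       (if j < length p then (p[i := p ! i - 1])[j := p ! j + 1]
        else p[i := p ! i - 1] @ [1])))"

definition elementary_move :: "nat list \<Rightarrow> nat list \<Rightarrow> bool" where
  "elementary_move p q \<longleftrightarrow>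
     (\<exists>i < length p. \<exists>j \<le> length p. j \<noteq> i \<and> q = transfer p i j \<and> q \<noteq> p)"

definition partition_adj :: "nat \<Rightarrow> nat list \<Rightarrow> nat list \<Rightarrow> bool" where
  "partition_adj n p q \<longleftrightarrow> is_partition n p \<and> is_partition n q \<and>
     (elementary_move p q \<or> elementary_move q p)"

definition is_clique :: "nat \<Rightarrow> nat list set \<Rightarrow> bool" where
  "is_clique n S \<longleftrightarrow> S \<subseteq> {p. is_partition n p} \<and>
     (\<forall>p\<in>S. \<forall>q\<in>S. p \<noteq> q \<longrightarrow> partition_adj n p q)"

definition clique_complex_simplex :: "nat \<Rightarrow> nat \<Rightarrow> nat list set \<Rightarrow> bool" where
  "clique_complex_simplex n k \<sigma> \<longleftrightarrow> finite \<sigma> \<and> card \<sigma> = k + 1 \<and> is_clique n \<sigma>"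

end

theory Submission
  imports Defs "HOL-Library.Multiset"
begin

text \<open>Each of the six pairs differs by a single unit transfer: \<alpha> becomes \<beta>, \<gamma>1, \<gamma>2 by
  splitting off a unit from a part a + 1, a, a - 1 respectively as a new part 1; \<beta> becomes \<gamma>1, \<gamma>2
  by moving a unit from a part a, resp. a - 1, to another part a; and \<gamma>1 becomes \<gamma>2 by moving
  a unit from one part a - 1 to the other. As a transfer sorts its result, such moves are best
  recognised on the multisets of parts.\<close>

lemma sorted_wrt_replicate: "R x x \<Longrightarrow> sorted_wrt R (replicate n x)"
  by (induction n) auto

lemma rev_sort_filter_nonzero_eq:
  fixes xs ys :: "'a::{linorder,zero} list"
  assumes "0 \<notin> set xs" and "mset xs = mset ys" and "sorted_wrt (\<ge>) ys"
  shows "rev (sort (filter (\<lambda>v. v \<noteq> 0) xs)) = ys"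
proof -
  have "filter (\<lambda>v. v \<noteq> 0) xs = xs"
    using assms(1) by (induction xs) auto
  moreover have "sort xs = rev ys"
    using assms(2,3) by (intro properties_for_sort) (simp_all add: sorted_wrt_rev)
  ultimately show ?thesis by simp
qed

lemma elementary_move_to_new_part:
  assumes "0 \<notin> set p" and "x \<in> set p" and "2 \<le> x"
    and "sorted_wrt (\<ge>) q" and q: "mset q = mset p - {#x#} + {#x - 1, 1#}"
  shows "elementary_move p q"
proof -
  obtain i where i: "i < length p" "p ! i = x"
    using assms(2) by (auto simp: in_set_conv_nth)
  let ?l = "p[i := x - 1] @ [1]"
  have "0 \<notin> set ?l"
    using assms(1,3) set_update_subset_insert[of p i "x - 1"] by auto
  moreover have "mset ?l = mset q"
    using i q by (simp add: mset_update)
  ultimately have "rev (sort (filter (\<lambda>v. v \<noteq> 0) ?l)) = q"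
    using assms(4) by (rule rev_sort_filter_nonzero_eq)
  then have "transfer p i (length p) = q"
    using i(2) by (simp add: transfer_def)
  moreover have "length q = length p + 1"
    using arg_cong[OF q, of size] assms(2) i(1) by (simp add: size_Diff_singleton)
  then have "q \<noteq> p"
    by auto
  ultimately show ?thesis
    unfolding elementary_move_def using i(1) by auto
qed

lemma elementary_move_between_parts:
  assumes "0 \<notin> set p" and "x \<in> set p" and "y \<in># mset p - {#x#}"
    and "2 \<le> x" and "x \<noteq> y + 1"
    and "sorted_wrt (\<ge>) q" and q: "mset q = mset p - {#x, y#} + {#x - 1, y + 1#}"
  shows "elementary_move p q"
proof -
  obtain i where i: "i < length p" "p ! i = x"
    using assms(2) by (auto simp: in_set_conv_nth)
  have "y \<in> set (p[i := y + 1])"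
    using assms(3) i by (auto simp: mset_update simp flip: set_mset_mset)
  then obtain j where j: "j < length p" "p[i := y + 1] ! j = y"
    by (auto simp: in_set_conv_nth)
  then have "j \<noteq> i" "p ! j = y"
    using i by (auto simp: nth_list_update split: if_splits)
  let ?l = "(p[i := x - 1])[j := y + 1]"
  have "0 \<notin> set ?l"
    using assms(1,4) set_update_subset_insert[of p i "x - 1"]
      set_update_subset_insert[of "p[i := x - 1]" j "y + 1"] by auto
  moreover have "mset ?l = mset q"
    using i j \<open>j \<noteq> i\<close> \<open>p ! j = y\<close> assms(3) q by (simp add: mset_update add_mset_commute)
  ultimately have "rev (sort (filter (\<lambda>v. v \<noteq> 0) ?l)) = q"
    using assms(6) by (rule rev_sort_filter_nonzero_eq)
  then have "transfer p i j = q"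
    using i(2) j(1) \<open>p ! j = y\<close> by (simp add: transfer_def)
  moreover have "q \<noteq> p"
  proof
    assume "q = p"
    have "{#x, y#} \<subseteq># mset p"
      using assms(2,3) by (simp add: insert_subset_eq_iff)
    then have "{#x, y#} = {#x - 1, y + 1#}"
      using q \<open>q = p\<close> by (metis subset_mset.le_imp_diff_is_add union_left_cancel)
    then show False
      using assms(4,5) by (simp add: add_eq_conv_ex)
  qed
  ultimately show ?thesis
    unfolding elementary_move_def using i(1) j(1) \<open>j \<noteq> i\<close> by (blast intro: less_imp_le)
qed

theorem proposition3p7:
  fixes a b :: nat
  assumes "a \<ge> 3" and "b \<ge> 3"
  defines "\<alpha> \<equiv> (a + 1) # replicate (b - 2) a @ [a - 1]"
      and "\<beta> \<equiv> replicate (b - 1) a @ [a - 1, 1]"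
      and "\<gamma>1 \<equiv> (a + 1) # replicate (b - 3) a @ [a - 1, a - 1, 1]"
      and "\<gamma>2 \<equiv> (a + 1) # replicate (b - 2) a @ [a - 2, 1]"
  shows "card {\<alpha>, \<beta>, \<gamma>1, \<gamma>2} = 4 \<and> is_clique (a * b) {\<alpha>, \<beta>, \<gamma>1, \<gamma>2}
         \<and> (\<exists>\<sigma>. clique_complex_simplex (a * b) 3 \<sigma> \<and> \<alpha> \<in> \<sigma> \<and> \<beta> \<in> \<sigma>)"
proof -
  obtain c k where a: "a = c + 3" and b: "b = k + 3"
    using assms le_Suc_ex by (metis add.commute)
  note list_simps = \<alpha>_def \<beta>_def \<gamma>1_def \<gamma>2_def a b sorted_wrt_append sorted_wrt_replicate
  have partition: "is_partition (a * b) p" if "p \<in> {\<alpha>, \<beta>, \<gamma>1, \<gamma>2}" for p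
    using that unfolding is_partition_def by (auto simp: list_simps sum_list_replicate algebra_simps)
  have moves: "elementary_move \<alpha> \<beta>" "elementary_move \<alpha> \<gamma>1" "elementary_move \<alpha> \<gamma>2"
    "elementary_move \<beta> \<gamma>1" "elementary_move \<beta> \<gamma>2" "elementary_move \<gamma>1 \<gamma>2"
  proof -
    show "elementary_move \<alpha> \<beta>"
      by (rule elementary_move_to_new_part[of _ "a + 1"]) (auto simp: list_simps add_mset_commute)
    show "elementary_move \<alpha> \<gamma>1"
      by (rule elementary_move_to_new_part[of _ a]) (auto simp: list_simps add_mset_commute)
    show "elementary_move \<alpha> \<gamma>2"
      by (rule elementary_move_to_new_part[of _ "a - 1"]) (auto simp: list_simps add_mset_commute)
    show "elementary_move \<beta> \<gamma>1"
      by (rule elementary_move_between_parts[of _ a a]) (auto simp: list_simps add_mset_commute)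
    show "elementary_move \<beta> \<gamma>2"
      by (rule elementary_move_between_parts[of _ "a - 1" a]) (auto simp: list_simps add_mset_commute)
    show "elementary_move \<gamma>1 \<gamma>2"
      by (rule elementary_move_between_parts[of _ "a - 1" "a - 1"])
        (auto simp: list_simps add_mset_commute)
  qed
  then have card: "card {\<alpha>, \<beta>, \<gamma>1, \<gamma>2} = 4"
    by (auto simp: elementary_move_def)
  have clique: "is_clique (a * b) {\<alpha>, \<beta>, \<gamma>1, \<gamma>2}"
    unfolding is_clique_def partition_adj_def using partition moves by auto
  show ?thesis
    using card clique unfolding clique_complex_simplex_def
    by (intro conjI exI[of _ "{\<alpha>, \<beta>, \<gamma>1, \<gamma>2}"]) auto
qed
end
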